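(* Let $(V,E)$ be a graph with $|V|=n$. Then $|\{X\subseteq V\mid X \text{ is a clique}\}|\cdot|\{Y\subseteq V \mid Y\text{ is a coclique}\}| \le (n+1)2^n$.
   Context: A graph is a finite simple undirected graph $(V,E)$. A clique is a set $X\subseteq V$ with every two distinct vertices adjacent; a coclique is a set $Y\subseteq V$ with no two distinct vertices adjacent (the empty set and singletons count as both). *)

theory Defs
  imports Main
begin

definition simple_graph :: "'a set \<Rightarrow> 'a set set \<Rightarrow> bool" where
  "simple_graph V E \<longleftrightarrow> finite V \<and> (\<forall>e\<in>E. e \<subseteq> V \<and> card e = 2)"

definition is_clique :: "'a set set \<Rightarrow> 'a set \<Rightarrow> bool" where
  "is_clique E X \<longleftrightarrow> (\<forall>x\<in>X. \<forall>y\<in>X. x \<noteq> y \<longrightarrow> {x, y} \<in> E)"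

definition is_coclique :: "'a set set \<Rightarrow> 'a set \<Rightarrow> bool" where
  "is_coclique E Y \<longleftrightarrow> (\<forall>x\<in>Y. \<forall>y\<in>Y. x \<noteq> y \<longrightarrow> {x, y} \<notin> E)"

end

theory Submission
  imports Defs
begin

text \<open>Fix a vertex v with neighbourhood N and non-neighbourhood M, so that the other vertices
  split as N \<union> M. A clique either avoids v or is v added to a clique of N; dually a coclique
  avoids v or is v added to a coclique of M. Multiplying out, the product c(S) i(S) of the
  clique and coclique counts equals c(S-v) i(S-v) + c(N) i(S-v) + c(S-v) i(M) + c(N) i(M).
  Since counts are submultiplicative over the partition, c(S-v) \<le> c(N) c(M) and
  i(S-v) \<le> i(N) i(M); combined with induction on N, M and S-v and the trivial bound
  2^|T| for the counts on a set T, the four terms add up to at most (|S|+1) 2^|S|.\<close>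

lemma is_coclique_eq_is_clique_Compl: "is_coclique E = is_clique (- E)"
  by (auto simp: fun_eq_iff is_coclique_def is_clique_def)

definition cliques :: "'a set set \<Rightarrow> 'a set \<Rightarrow> 'a set set" where
  "cliques E S = {X. X \<subseteq> S \<and> is_clique E X}"

definition neighbours :: "'a set set \<Rightarrow> 'a set \<Rightarrow> 'a \<Rightarrow> 'a set" where
  "neighbours E S v = {u \<in> S. u \<noteq> v \<and> {u, v} \<in> E}"

lemma is_clique_insert:
  "is_clique E (insert v X) \<longleftrightarrow> is_clique E X \<and> (\<forall>u\<in>X. u \<noteq> v \<longrightarrow> {u, v} \<in> E)"
  by (auto simp: is_clique_def insert_commute)

lemma finite_cliques: "finite S \<Longrightarrow> finite (cliques E S)"
  by (simp add: cliques_def)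

lemma card_cliques_le_Pow:
  assumes "finite S"
  shows "card (cliques E S) \<le> 2 ^ card S"
proof -
  have "card (cliques E S) \<le> card (Pow S)"
    using assms by (intro card_mono) (auto simp: cliques_def)
  then show ?thesis
    using assms by (simp add: card_Pow)
qed

lemma card_cliques_Un_le:
  assumes "finite A" "finite B"
  shows "card (cliques E (A \<union> B)) \<le> card (cliques E A) * card (cliques E B)"
proof -
  have "card (cliques E (A \<union> B)) \<le> card (cliques E A \<times> cliques E B)"
  proof (rule card_inj_on_le)
    show "inj_on (\<lambda>X. (X \<inter> A, X \<inter> B)) (cliques E (A \<union> B))"
      by (rule inj_onI) (auto simp: cliques_def)
    show "(\<lambda>X. (X \<inter> A, X \<inter> B)) ` cliques E (A \<union> B) \<subseteq> cliques E A \<times> cliques E B"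
      by (auto simp: cliques_def is_clique_def)
  qed (use assms in \<open>simp add: finite_cliques\<close>)
  then show ?thesis
    by (simp add: card_cartesian_product)
qed

lemma cliques_split_vertex:
  assumes "v \<in> S"
  shows "cliques E S = cliques E (S - {v}) \<union> insert v ` cliques E (neighbours E S v)"
proof (intro equalityI subsetI)
  fix X
  assume X: "X \<in> cliques E S"
  show "X \<in> cliques E (S - {v}) \<union> insert v ` cliques E (neighbours E S v)"
  proof (cases "v \<in> X")
    case True
    then have "X = insert v (X - {v})" by blast
    moreover have "X - {v} \<in> cliques E (neighbours E S v)"
      using X \<open>X = insert v (X - {v})\<close> is_clique_insert[of E v "X - {v}"]
      by (auto simp: cliques_def neighbours_def)
    ultimately show ?thesis by blast
  next
    case False
    then show ?thesis
      using X by (auto simp: cliques_def)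
  qed
next
  fix X
  assume "X \<in> cliques E (S - {v}) \<union> insert v ` cliques E (neighbours E S v)"
  then show "X \<in> cliques E S"
    using assms by (auto simp: cliques_def neighbours_def is_clique_insert)
qed

lemma card_cliques_split_vertex:
  assumes "finite S" "v \<in> S"
  shows "card (cliques E S) = card (cliques E (S - {v})) + card (cliques E (neighbours E S v))"
proof -
  have "inj_on (insert v) (cliques E (neighbours E S v))"
    by (rule inj_onI) (auto simp: cliques_def neighbours_def)
  moreover have "cliques E (S - {v}) \<inter> insert v ` cliques E (neighbours E S v) = {}"
    by (auto simp: cliques_def)
  moreover have "finite (neighbours E S v)"
    using assms(1) by (simp add: neighbours_def)
  ultimately show ?thesis
    using assms
    by (simp add: cliques_split_vertex[of v S] card_Un_disjoint finite_cliques card_image)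
qed

lemma vertex_step_arith:
  fixes c i cN iN cM iM a b :: nat
  assumes IH: "c * i \<le> (a + b + 1) * 2 ^ (a + b)"
    and c_le: "c \<le> cN * cM" and i_le: "i \<le> iN * iM"
    and IH_N: "cN * iN \<le> (a + 1) * 2 ^ a" and IH_M: "cM * iM \<le> (b + 1) * 2 ^ b"
    and cN_le: "cN \<le> 2 ^ a" and iM_le: "iM \<le> 2 ^ b"
  shows "(c + cN) * (i + iM) \<le> (a + b + 2) * 2 ^ (a + b + 1)"
proof -
  have "cN * i \<le> (cN * iN) * iM"
    using i_le by (simp add: mult.assoc)
  also have "\<dots> \<le> (a + 1) * 2 ^ a * 2 ^ b"
    using IH_N iM_le by (rule mult_le_mono)
  finally have cross_N: "cN * i \<le> (a + 1) * 2 ^ a * 2 ^ b" .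
  have "c * iM \<le> cN * (cM * iM)"
    using c_le by (simp add: mult.assoc)
  also have "\<dots> \<le> 2 ^ a * ((b + 1) * 2 ^ b)"
    using cN_le IH_M by (rule mult_le_mono)
  finally have cross_M: "c * iM \<le> 2 ^ a * ((b + 1) * 2 ^ b)" .
  have corner: "cN * iM \<le> 2 ^ a * 2 ^ b"
    using cN_le iM_le by (rule mult_le_mono)
  have "(c + cN) * (i + iM) = c * i + cN * i + c * iM + cN * iM"
    by (simp add: algebra_simps)
  also have "\<dots> \<le> (a + b + 1) * 2 ^ (a + b) + (a + 1) * 2 ^ a * 2 ^ b
       + 2 ^ a * ((b + 1) * 2 ^ b) + 2 ^ a * 2 ^ b"
    using IH cross_N cross_M corner by linarith
  also have "\<dots> = (a + b + 2) * 2 ^ (a + b + 1)"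
    by (simp add: power_add algebra_simps)
  finally show ?thesis .
qed

lemma card_cliques_mult_card_cliques_Compl_le:
  "finite S \<Longrightarrow> card (cliques E S) * card (cliques (- E) S) \<le> (card S + 1) * 2 ^ card S"
proof (induction S rule: finite_psubset_induct)
  case (psubset S)
  show ?case
  proof (cases "S = {}")
    case True
    then have "cliques F S = {{}}" for F :: "'a set set"
      by (auto simp: cliques_def is_clique_def)
    then show ?thesis
      using True by simp
  next
    case False
    then obtain v where v: "v \<in> S" by blast
    define N where "N = neighbours E S v"
    define M where "M = neighbours (- E) S v"
    have finite: "finite N" "finite M"
      using psubset.hyps by (simp_all add: N_def M_def neighbours_def)
    have partition: "S - {v} = N \<union> M" "N \<inter> M = {}"
      by (auto simp: N_def M_def neighbours_def)
    have card_S: "card S = card N + card M + 1"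
      using psubset.hyps v finite partition by (simp add: card_Un_disjoint flip: card_Suc_Diff1)
    have proper: "S - {v} \<subset> S" "N \<subset> S" "M \<subset> S"
      using v by (auto simp: N_def M_def neighbours_def)
    have "card (cliques E S) * card (cliques (- E) S)
        = (card (cliques E (S - {v})) + card (cliques E N))
          * (card (cliques (- E) (S - {v})) + card (cliques (- E) M))"
      using psubset.hyps v by (simp add: card_cliques_split_vertex N_def M_def)
    also have "\<dots> \<le> (card N + card M + 2) * 2 ^ (card N + card M + 1)"
    proof (rule vertex_step_arith)
      show "card (cliques E (S - {v})) * card (cliques (- E) (S - {v}))
          \<le> (card N + card M + 1) * 2 ^ (card N + card M)"
        using psubset.IH[OF proper(1)] partition finite by (simp add: card_Un_disjoint)
      show "card (cliques E (S - {v})) \<le> card (cliques E N) * card (cliques E M)"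
        "card (cliques (- E) (S - {v})) \<le> card (cliques (- E) N) * card (cliques (- E) M)"
        using partition finite by (simp_all add: card_cliques_Un_le)
      show "card (cliques E N) * card (cliques (- E) N) \<le> (card N + 1) * 2 ^ card N"
        "card (cliques E M) * card (cliques (- E) M) \<le> (card M + 1) * 2 ^ card M"
        using psubset.IH proper by simp_all
      show "card (cliques E N) \<le> 2 ^ card N" "card (cliques (- E) M) \<le> 2 ^ card M"
        using finite by (simp_all add: card_cliques_le_Pow)
    qed
    also have "\<dots> = (card S + 1) * 2 ^ card S"
      using card_S by simp
    finally show ?thesis .
  qed
qed

theorem lemma6:
  fixes V :: "'a set" and E :: "'a set set" and n :: nat
  assumes "simple_graph V E" and "card V = n"
  shows "card {X. X \<subseteq> V \<and> is_clique E X} * card {Y. Y \<subseteq> V \<and> is_coclique E Y}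
           \<le> (n + 1) * 2 ^ n"
proof -
  have "finite V"
    using assms(1) by (simp add: simple_graph_def)
  then show ?thesis
    using card_cliques_mult_card_cliques_Compl_le[of V E] assms(2)
    by (simp add: cliques_def is_coclique_eq_is_clique_Compl)
qed

end
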